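(* The bidisc $\mathbb{D}\times\mathbb{D}$ and the domain $\Omega_1=\{(u,v)\in\mathbb{C}^2: |u^2|+|v^2|-1<|u^2+v^2-1|\}$ are biholomorphic.
   Context: $\mathbb{D}$ is the open unit disc in $\mathbb{C}$. *)

theory Defs
  imports "HOL-Analysis.Analysis"
begin

text \<open>Holomorphy for maps between open subsets of C^2, with C^2 modelled as complex \<times> complex:
  f is holomorphic on S iff at every point of S it is (real) Frechet differentiable
  and its derivative is complex linear, i.e. commutes with multiplication by i.\<close>
definition holomorphic2_on ::
  "(complex \<times> complex \<Rightarrow> complex \<times> complex) \<Rightarrow> (complex \<times> complex) set \<Rightarrow> bool" where
  "holomorphic2_on f S \<longleftrightarrow>
     (\<forall>z\<in>S. \<exists>f'. (f has_derivative f') (at z) \<and>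
        (\<forall>a b. f' (\<i> * a, \<i> * b) = (\<i> * fst (f' (a, b)), \<i> * snd (f' (a, b)))))"

definition biholomorphic2 :: "(complex \<times> complex) set \<Rightarrow> (complex \<times> complex) set \<Rightarrow> bool" where
  "biholomorphic2 A B \<longleftrightarrow>
     (\<exists>f g. holomorphic2_on f A \<and> holomorphic2_on g B \<and>
            f ` A \<subseteq> B \<and> g ` B \<subseteq> A \<and>
            (\<forall>z\<in>A. g (f z) = z) \<and> (\<forall>w\<in>B. f (g w) = w))"

definition unit_disc :: "complex set" where
  "unit_disc = ball 0 1"

definition Omega1 :: "(complex \<times> complex) set" where
  "Omega1 = {(u, v). norm (u^2) + norm (v^2) - 1 < norm (u^2 + v^2 - 1)}"

end

theory Submission
  imports Defs
begin

text \<open>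
  Put p = z w. The map (z, w) \<mapsto> (u, v) = ((z + w)/(1 + p), i (z - w)/(1 + p)) satisfies
  u - i v = 2 z/(1 + p), u + i v = 2 w/(1 + p) and 1 - u^2 - v^2 = ((1 - p)/(1 + p))^2, so by the
  parallelogram law it maps (z, w) into Omega1 exactly when (1 - |z|^2)(1 - |w|^2) > 0.
  Conversely, on Omega1 the triangle inequality keeps 1 - u^2 - v^2 off the nonpositive reals, so
  its principal square root R has positive real part, and ((u - i v)/(1 + R), (u + i v)/(1 + R))
  is a preimage whose coordinates have product (1 - R)/(1 + R), a point of the unit disc; this
  rules out the second branch |z|, |w| > 1 of the inequality. Both maps are built from field
  operations and csqrt away from its branch cut, hence are holomorphic.
\<close>

definition complex_differentiable2 ::
    "(complex \<times> complex \<Rightarrow> complex) \<Rightarrow> complex \<times> complex \<Rightarrow> bool" where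
  "complex_differentiable2 h z \<longleftrightarrow>
     (\<exists>A B. (h has_derivative (\<lambda>p. A * fst p + B * snd p)) (at z))"

lemma complex_differentiable2_const: "complex_differentiable2 (\<lambda>_. c) z"
  unfolding complex_differentiable2_def
  by (intro exI[of _ 0]) (auto intro: has_derivative_eq_rhs[OF has_derivative_const])

lemma complex_differentiable2_fst: "complex_differentiable2 fst z"
  unfolding complex_differentiable2_def
  by (intro exI[of _ 1] exI[of _ 0])
    (auto intro: has_derivative_eq_rhs[OF has_derivative_fst[OF has_derivative_ident]])

lemma complex_differentiable2_snd: "complex_differentiable2 snd z"
  unfolding complex_differentiable2_def
  by (intro exI[of _ 0] exI[of _ 1])
    (auto intro: has_derivative_eq_rhs[OF has_derivative_snd[OF has_derivative_ident]])

lemma complex_differentiable2_add: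
  assumes "complex_differentiable2 f z" "complex_differentiable2 g z"
  shows "complex_differentiable2 (\<lambda>x. f x + g x) z"
proof -
  obtain A B C D where
    "(f has_derivative (\<lambda>p. A * fst p + B * snd p)) (at z)"
    "(g has_derivative (\<lambda>p. C * fst p + D * snd p)) (at z)"
    using assms unfolding complex_differentiable2_def by blast
  from has_derivative_add[OF this] show ?thesis
    unfolding complex_differentiable2_def
    by (intro exI[of _ "A + C"] exI[of _ "B + D"]) (auto elim!: has_derivative_eq_rhs simp: algebra_simps)
qed

lemma complex_differentiable2_diff:
  assumes "complex_differentiable2 f z" "complex_differentiable2 g z"
  shows "complex_differentiable2 (\<lambda>x. f x - g x) z"
proof -
  obtain A B C D where
    "(f has_derivative (\<lambda>p. A * fst p + B * snd p)) (at z)"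
    "(g has_derivative (\<lambda>p. C * fst p + D * snd p)) (at z)"
    using assms unfolding complex_differentiable2_def by blast
  from has_derivative_diff[OF this] show ?thesis
    unfolding complex_differentiable2_def
    by (intro exI[of _ "A - C"] exI[of _ "B - D"]) (auto elim!: has_derivative_eq_rhs simp: algebra_simps)
qed

lemma complex_differentiable2_mult:
  assumes "complex_differentiable2 f z" "complex_differentiable2 g z"
  shows "complex_differentiable2 (\<lambda>x. f x * g x) z"
proof -
  obtain A B C D where
    "(f has_derivative (\<lambda>p. A * fst p + B * snd p)) (at z)"
    "(g has_derivative (\<lambda>p. C * fst p + D * snd p)) (at z)"
    using assms unfolding complex_differentiable2_def by blast
  from has_derivative_mult[OF this] show ?thesis
    unfolding complex_differentiable2_def
    by (intro exI[of _ "f z * C + A * g z"] exI[of _ "f z * D + B * g z"])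
      (auto elim!: has_derivative_eq_rhs simp: algebra_simps)
qed

lemma complex_differentiable2_power:
  "complex_differentiable2 f z \<Longrightarrow> complex_differentiable2 (\<lambda>x. f x ^ n) z"
  by (induction n) (simp_all add: complex_differentiable2_const complex_differentiable2_mult)

lemma complex_differentiable2_compose:
  assumes "complex_differentiable2 f z" "(g has_field_derivative D) (at (f z))"
  shows "complex_differentiable2 (\<lambda>x. g (f x)) z"
proof -
  obtain A B where "(f has_derivative (\<lambda>p. A * fst p + B * snd p)) (at z)"
    using assms(1) unfolding complex_differentiable2_def by blast
  from has_derivative_compose[OF this assms(2)[unfolded has_field_derivative_def]] show ?thesis
    unfolding complex_differentiable2_def
    by (intro exI[of _ "D * A"] exI[of _ "D * B"]) (auto elim!: has_derivative_eq_rhs simp: algebra_simps)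
qed

lemma complex_differentiable2_divide:
  assumes "complex_differentiable2 f z" "complex_differentiable2 g z" "g z \<noteq> 0"
  shows "complex_differentiable2 (\<lambda>x. f x / g x) z"
  unfolding divide_inverse
  using complex_differentiable2_compose[OF assms(2) DERIV_inverse[OF assms(3)]]
  by (intro complex_differentiable2_mult assms(1))

lemma complex_differentiable2_csqrt:
  assumes "complex_differentiable2 f z" "f z \<notin> \<real>\<^sub>\<le>\<^sub>0"
  shows "complex_differentiable2 (\<lambda>x. csqrt (f x)) z"
  using assms(1) has_field_derivative_csqrt[OF assms(2)] by (rule complex_differentiable2_compose)

lemmas complex_differentiable2_intros =
  complex_differentiable2_const complex_differentiable2_fst complex_differentiable2_snd
  complex_differentiable2_add complex_differentiable2_diff complex_differentiable2_mult
  complex_differentiable2_power complex_differentiable2_divide complex_differentiable2_csqrt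

lemma holomorphic2_onI:
  assumes "\<And>z. z \<in> S \<Longrightarrow>
    complex_differentiable2 (\<lambda>x. fst (f x)) z \<and> complex_differentiable2 (\<lambda>x. snd (f x)) z"
  shows "holomorphic2_on f S"
  unfolding holomorphic2_on_def
proof
  fix z assume "z \<in> S"
  then obtain A B C D where
    "((\<lambda>x. fst (f x)) has_derivative (\<lambda>p. A * fst p + B * snd p)) (at z)"
    "((\<lambda>x. snd (f x)) has_derivative (\<lambda>p. C * fst p + D * snd p)) (at z)"
    using assms unfolding complex_differentiable2_def by blast
  from has_derivative_Pair[OF this]
  have "(f has_derivative (\<lambda>p. (A * fst p + B * snd p, C * fst p + D * snd p))) (at z)"
    by simp
  then show "\<exists>f'. (f has_derivative f') (at z) \<and>
      (\<forall>a b. f' (\<i> * a, \<i> * b) = (\<i> * fst (f' (a, b)), \<i> * snd (f' (a, b))))"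
    by (intro exI[of _ "\<lambda>p. (A * fst p + B * snd p, C * fst p + D * snd p)"]) (auto simp: algebra_simps)
qed

lemma norm_add_sq_plus_norm_diff_sq:
  fixes a b :: "'a::real_inner"
  shows "(norm (a + b))\<^sup>2 + (norm (a - b))\<^sup>2 = 2 * (norm a)\<^sup>2 + 2 * (norm b)\<^sup>2"
  by (simp add: power2_norm_eq_inner inner_add inner_diff inner_commute)

lemma less_one_if_mult_less_one:
  fixes x y :: real
  assumes "0 \<le> x" "0 \<le> y" "0 < (1 - x\<^sup>2) * (1 - y\<^sup>2)" "x * y < 1"
  shows "x < 1 \<and> y < 1"
proof -
  have sq: "0 < 1 - t\<^sup>2 \<longleftrightarrow> t < 1" if "0 \<le> t" for t :: real
    using that abs_square_less_1[of t] by simp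
  have "0 < 1 - x\<^sup>2 \<longleftrightarrow> 0 < 1 - y\<^sup>2"
    using assms(3) by (auto simp: zero_less_mult_iff)
  then have "x < 1 \<longleftrightarrow> y < 1"
    using sq assms(1,2) by simp
  moreover have "\<not> (1 \<le> x \<and> 1 \<le> y)"
    using assms(4) mult_mono[of 1 x 1 y] by auto
  ultimately show ?thesis
    by linarith
qed

lemma Re_csqrt_pos:
  assumes "z \<notin> \<real>\<^sub>\<le>\<^sub>0"
  shows "0 < Re (csqrt z)"
proof (rule ccontr)
  define c where "c = csqrt z"
  assume "\<not> 0 < Re (csqrt z)"
  then have "Re c = 0"
    using Re_csqrt[of z] unfolding c_def by linarith
  moreover have "z = c\<^sup>2"
    by (simp add: c_def)
  ultimately have "Re z \<le> 0" "Im z = 0"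
    by (simp_all add: Re_power2 Im_power2)
  with assms show False
    by (simp add: complex_nonpos_Reals_iff)
qed

lemma norm_one_minus_less_norm_one_plus_iff: "norm (1 - R) < norm (1 + R) \<longleftrightarrow> 0 < Re R"
proof -
  have "norm (1 - R) < norm (1 + R) \<longleftrightarrow> (norm (1 - R))\<^sup>2 < (norm (1 + R))\<^sup>2"
    using abs_le_square_iff[of "norm (1 + R)" "norm (1 - R)"] by (simp add: not_le[symmetric])
  also have "(norm (1 + R))\<^sup>2 = (norm (1 - R))\<^sup>2 + 4 * Re R"
    by (simp only: cmod_power2) (simp add: power2_eq_square algebra_simps)
  finally show ?thesis
    by simp
qed

lemma one_plus_neq_zero_if_norm_less_one: "norm (p :: complex) < 1 \<Longrightarrow> 1 + p \<noteq> 0"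
  by (auto simp: add_eq_0_iff)

lemma one_plus_neq_zero_if_Re_pos: "0 < Re (R :: complex) \<Longrightarrow> 1 + R \<noteq> 0"
  by (auto simp: add_eq_0_iff)

lemma Re_cayley_pos:
  assumes "norm p < 1"
  shows "0 < Re ((1 - p) / (1 + p))"
proof -
  define q where "q = (1 - p) / (1 + p)"
  have nz: "1 + p \<noteq> 0"
    using assms by (rule one_plus_neq_zero_if_norm_less_one)
  have "1 - q = 2 * p / (1 + p)" "1 + q = 2 / (1 + p)"
    using nz by (simp_all add: q_def field_simps)
  then have "norm (1 - q) < norm (1 + q)"
    using assms nz by (simp add: norm_divide norm_mult divide_strict_right_mono)
  then show ?thesis
    by (simp add: q_def norm_one_minus_less_norm_one_plus_iff)
qed

lemma norm_cayley_less_one: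
  assumes "0 < Re R"
  shows "norm ((1 - R) / (1 + R)) < 1"
proof -
  have "norm (1 - R) < norm (1 + R)"
    using assms by (simp add: norm_one_minus_less_norm_one_plus_iff)
  then show ?thesis
    by (simp add: norm_divide divide_less_eq)
qed

definition bidisc_to_Omega1 :: "complex \<times> complex \<Rightarrow> complex \<times> complex" where
  "bidisc_to_Omega1 = (\<lambda>(z, w). ((z + w) / (1 + z * w), \<i> * (z - w) / (1 + z * w)))"

definition Omega1_to_bidisc :: "complex \<times> complex \<Rightarrow> complex \<times> complex" where
  "Omega1_to_bidisc = (\<lambda>(u, v).
     ((u - \<i> * v) / (1 + csqrt (1 - u\<^sup>2 - v\<^sup>2)),
      (u + \<i> * v) / (1 + csqrt (1 - u\<^sup>2 - v\<^sup>2))))"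

lemma one_minus_sq_bidisc_to_Omega1:
  assumes "bidisc_to_Omega1 (z, w) = (u, v)" "1 + z * w \<noteq> 0"
  shows "1 - u\<^sup>2 - v\<^sup>2 = ((1 - z * w) / (1 + z * w))\<^sup>2"
proof -
  have u: "u = (z + w) / (1 + z * w)" and v: "v = \<i> * (z - w) / (1 + z * w)"
    using assms(1) by (simp_all add: bidisc_to_Omega1_def)
  show ?thesis
    unfolding u v using assms(2) by (simp add: divide_simps) (simp add: power2_eq_square algebra_simps)
qed

lemma bidisc_to_Omega1_in_Omega1_iff:
  assumes "1 + z * w \<noteq> 0"
  shows "bidisc_to_Omega1 (z, w) \<in> Omega1 \<longleftrightarrow> 0 < (1 - (norm z)\<^sup>2) * (1 - (norm w)\<^sup>2)"
proof -
  define N where "N = (norm (1 + z * w))\<^sup>2"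
  define u v where "u = (z + w) / (1 + z * w)" and "v = \<i> * (z - w) / (1 + z * w)"
  have uv: "bidisc_to_Omega1 (z, w) = (u, v)"
    by (simp add: bidisc_to_Omega1_def u_def v_def)
  have "0 < N"
    using assms by (simp add: N_def)
  have "norm (u\<^sup>2) = (norm (z + w))\<^sup>2 / N" "norm (v\<^sup>2) = (norm (z - w))\<^sup>2 / N"
    by (simp_all add: u_def v_def N_def norm_divide norm_power norm_mult power_divide)
  then have lhs: "norm (u\<^sup>2) + norm (v\<^sup>2) = 2 * ((norm z)\<^sup>2 + (norm w)\<^sup>2) / N"
    by (simp add: add_divide_distrib[symmetric] norm_add_sq_plus_norm_diff_sq)
  have "norm (u\<^sup>2 + v\<^sup>2 - 1) = norm (1 - u\<^sup>2 - v\<^sup>2)"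
    by (simp add: norm_minus_commute diff_diff_eq)
  then have rhs: "norm (u\<^sup>2 + v\<^sup>2 - 1) = (norm (1 - z * w))\<^sup>2 / N"
    using one_minus_sq_bidisc_to_Omega1[OF uv assms] by (simp add: N_def norm_divide norm_power power_divide)
  have "bidisc_to_Omega1 (z, w) \<in> Omega1
      \<longleftrightarrow> 2 * ((norm z)\<^sup>2 + (norm w)\<^sup>2) / N - 1 < (norm (1 - z * w))\<^sup>2 / N"
    unfolding uv Omega1_def using lhs rhs by simp
  also have "\<dots> \<longleftrightarrow> (2 * ((norm z)\<^sup>2 + (norm w)\<^sup>2) - N) / N < (norm (1 - z * w))\<^sup>2 / N"
    using \<open>0 < N\<close> by (simp add: diff_divide_distrib)
  also have "\<dots> \<longleftrightarrow> 2 * ((norm z)\<^sup>2 + (norm w)\<^sup>2) < (norm (1 - z * w))\<^sup>2 + N"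
    using \<open>0 < N\<close> by (simp add: divide_less_cancel diff_less_eq)
  also have "(norm (1 - z * w))\<^sup>2 + N = 2 + 2 * (norm z * norm w)\<^sup>2"
    using norm_add_sq_plus_norm_diff_sq[of 1 "z * w"] by (simp add: N_def norm_mult)
  also have "2 * ((norm z)\<^sup>2 + (norm w)\<^sup>2) < 2 + 2 * (norm z * norm w)\<^sup>2
      \<longleftrightarrow> 0 < (1 - (norm z)\<^sup>2) * (1 - (norm w)\<^sup>2)"
    by (simp add: algebra_simps) linarith
  finally show ?thesis .
qed

lemma bidisc_to_Omega1_preimage:
  fixes u v R :: complex
  assumes root: "R\<^sup>2 = 1 - u\<^sup>2 - v\<^sup>2" and nz: "1 + R \<noteq> 0"
  defines "z \<equiv> (u - \<i> * v) / (1 + R)" and "w \<equiv> (u + \<i> * v) / (1 + R)"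
  shows "z * w = (1 - R) / (1 + R)" and "bidisc_to_Omega1 (z, w) = (u, v)"
proof -
  have "(u - \<i> * v) * (u + \<i> * v) = (1 - R) * (1 + R)"
    using root by (simp add: algebra_simps power2_eq_square)
  then have "z * w = ((1 - R) * (1 + R)) / ((1 + R) * (1 + R))"
    unfolding z_def w_def by (simp only: times_divide_times_eq)
  then show prod: "z * w = (1 - R) / (1 + R)"
    using nz by simp
  have "(u - \<i> * v) + (u + \<i> * v) = 2 * u" "\<i> * ((u - \<i> * v) - (u + \<i> * v)) = 2 * v"
    by (simp_all add: algebra_simps)
  then have "z + w = 2 * u / (1 + R)" "\<i> * (z - w) = 2 * v / (1 + R)"
    unfolding z_def w_def
    by (simp_all only: add_divide_distrib[symmetric] diff_divide_distrib[symmetric] times_divide_eq_right)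
  moreover have "1 + z * w = 2 / (1 + R)"
    unfolding prod using nz by (simp add: field_simps)
  ultimately show "bidisc_to_Omega1 (z, w) = (u, v)"
    using nz by (simp only: bidisc_to_Omega1_def case_prod_conv) simp
qed

lemma Omega1_not_nonpos_Reals:
  assumes "(u, v) \<in> Omega1"
  shows "1 - u\<^sup>2 - v\<^sup>2 \<notin> \<real>\<^sub>\<le>\<^sub>0"
proof
  define t where "t = Re (u\<^sup>2 + v\<^sup>2)"
  assume "1 - u\<^sup>2 - v\<^sup>2 \<in> \<real>\<^sub>\<le>\<^sub>0"
  then have t: "u\<^sup>2 + v\<^sup>2 = of_real t" "1 \<le> t"
    by (auto simp: t_def complex_nonpos_Reals_iff complex_eq_iff)
  have "u\<^sup>2 + v\<^sup>2 - 1 = of_real (t - 1)"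
    using t(1) by simp
  then have "norm (u\<^sup>2 + v\<^sup>2 - 1) = t - 1"
    using t(2) by (simp only: norm_of_real)
  also have "\<dots> = norm (u\<^sup>2 + v\<^sup>2) - 1"
    using t by simp
  also have "\<dots> \<le> norm (u\<^sup>2) + norm (v\<^sup>2) - 1"
    using norm_triangle_ineq[of "u\<^sup>2" "v\<^sup>2"] by simp
  finally show False
    using assms unfolding Omega1_def by simp
qed

lemma bidisc_to_Omega1_in_Omega1:
  assumes "x \<in> unit_disc \<times> unit_disc"
  shows "bidisc_to_Omega1 x \<in> Omega1"
proof -
  obtain z w where x: "x = (z, w)" and "norm z < 1" "norm w < 1"
    using assms by (auto simp: unit_disc_def)
  then have "1 + z * w \<noteq> 0"
    using norm_mult_less[of z 1 w 1] by (intro one_plus_neq_zero_if_norm_less_one) simp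
  moreover have "0 < (1 - (norm z)\<^sup>2) * (1 - (norm w)\<^sup>2)"
    using \<open>norm z < 1\<close> \<open>norm w < 1\<close> by (simp add: abs_square_less_1)
  ultimately show ?thesis
    by (simp add: x bidisc_to_Omega1_in_Omega1_iff)
qed

lemma Omega1_to_bidisc_root:
  assumes "(u, v) \<in> Omega1"
  obtains R where "R\<^sup>2 = 1 - u\<^sup>2 - v\<^sup>2" "0 < Re R" "1 + R \<noteq> 0"
    "Omega1_to_bidisc (u, v) = ((u - \<i> * v) / (1 + R), (u + \<i> * v) / (1 + R))"
proof
  show "0 < Re (csqrt (1 - u\<^sup>2 - v\<^sup>2))"
    using Omega1_not_nonpos_Reals[OF assms] by (rule Re_csqrt_pos)
  then show "1 + csqrt (1 - u\<^sup>2 - v\<^sup>2) \<noteq> 0"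
    by (rule one_plus_neq_zero_if_Re_pos)
qed (simp_all add: Omega1_to_bidisc_def)

lemma bidisc_to_Omega1_Omega1_to_bidisc:
  assumes "x \<in> Omega1"
  shows "bidisc_to_Omega1 (Omega1_to_bidisc x) = x"
proof -
  obtain u v where x: "x = (u, v)"
    by fastforce
  obtain R where "R\<^sup>2 = 1 - u\<^sup>2 - v\<^sup>2" "1 + R \<noteq> 0"
    "Omega1_to_bidisc (u, v) = ((u - \<i> * v) / (1 + R), (u + \<i> * v) / (1 + R))"
    using Omega1_to_bidisc_root[of u v] assms x by blast
  then show ?thesis
    using bidisc_to_Omega1_preimage(2) x by simp
qed

lemma Omega1_to_bidisc_in_bidisc:
  assumes "x \<in> Omega1"
  shows "Omega1_to_bidisc x \<in> unit_disc \<times> unit_disc"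
proof -
  obtain u v where x: "x = (u, v)"
    by fastforce
  obtain R where R: "R\<^sup>2 = 1 - u\<^sup>2 - v\<^sup>2" "0 < Re R" "1 + R \<noteq> 0"
    "Omega1_to_bidisc (u, v) = ((u - \<i> * v) / (1 + R), (u + \<i> * v) / (1 + R))"
    using Omega1_to_bidisc_root[of u v] assms x by blast
  obtain z w where zw: "Omega1_to_bidisc x = (z, w)"
    by fastforce
  have "z = (u - \<i> * v) / (1 + R)" "w = (u + \<i> * v) / (1 + R)"
    using R(4) zw x by simp_all
  then have "z * w = (1 - R) / (1 + R)" "bidisc_to_Omega1 (z, w) = (u, v)"
    using bidisc_to_Omega1_preimage[OF R(1,3)] by simp_all
  then have "norm (z * w) < 1" "bidisc_to_Omega1 (z, w) \<in> Omega1"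
    using norm_cayley_less_one[OF R(2)] assms x by simp_all
  then have "0 < (1 - (norm z)\<^sup>2) * (1 - (norm w)\<^sup>2)"
    using bidisc_to_Omega1_in_Omega1_iff one_plus_neq_zero_if_norm_less_one by blast
  then have "norm z < 1 \<and> norm w < 1"
    using less_one_if_mult_less_one[OF norm_ge_zero norm_ge_zero] \<open>norm (z * w) < 1\<close>
    by (simp add: norm_mult)
  then show ?thesis
    by (simp add: zw unit_disc_def)
qed

lemma Omega1_to_bidisc_bidisc_to_Omega1:
  assumes "x \<in> unit_disc \<times> unit_disc"
  shows "Omega1_to_bidisc (bidisc_to_Omega1 x) = x"
proof -
  obtain z w where x: "x = (z, w)" and "norm z < 1" "norm w < 1"
    using assms by (auto simp: unit_disc_def)
  define p where "p = z * w"
  have "norm p < 1"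
    unfolding p_def using norm_mult_less[of z 1 w 1] \<open>norm z < 1\<close> \<open>norm w < 1\<close> by simp
  then have nz: "1 + p \<noteq> 0"
    by (rule one_plus_neq_zero_if_norm_less_one)
  define u v where "u = (z + w) / (1 + p)" and "v = \<i> * (z - w) / (1 + p)"
  have uv: "bidisc_to_Omega1 (z, w) = (u, v)"
    by (simp add: bidisc_to_Omega1_def u_def v_def p_def)
  have "csqrt (1 - u\<^sup>2 - v\<^sup>2) = (1 - p) / (1 + p)"
    using one_minus_sq_bidisc_to_Omega1[OF uv] nz Re_cayley_pos[OF \<open>norm p < 1\<close>]
    by (intro csqrt_unique) (simp_all add: p_def)
  moreover have "1 + (1 - p) / (1 + p) = 2 / (1 + p)"
    using nz by (simp add: field_simps)
  moreover have "u - \<i> * v = ((z + w) - \<i> * (\<i> * (z - w))) / (1 + p)"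
    "u + \<i> * v = ((z + w) + \<i> * (\<i> * (z - w))) / (1 + p)"
    by (simp_all only: u_def v_def diff_divide_distrib add_divide_distrib times_divide_eq_right)
  then have "u - \<i> * v = 2 * z / (1 + p)" "u + \<i> * v = 2 * w / (1 + p)"
    by (simp_all add: algebra_simps)
  ultimately show ?thesis
    using nz by (simp add: x uv Omega1_to_bidisc_def)
qed

lemma holomorphic2_on_bidisc_to_Omega1: "holomorphic2_on bidisc_to_Omega1 (unit_disc \<times> unit_disc)"
proof (rule holomorphic2_onI)
  fix x assume "x \<in> unit_disc \<times> unit_disc"
  then have "norm (fst x * snd x) < 1"
    using norm_mult_less[of "fst x" 1 "snd x" 1] by (auto simp: unit_disc_def)
  then have nz: "1 + fst x * snd x \<noteq> 0"
    by (rule one_plus_neq_zero_if_norm_less_one)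
  show "complex_differentiable2 (\<lambda>x. fst (bidisc_to_Omega1 x)) x \<and>
      complex_differentiable2 (\<lambda>x. snd (bidisc_to_Omega1 x)) x"
    unfolding bidisc_to_Omega1_def case_prod_unfold fst_conv snd_conv
    by (intro conjI complex_differentiable2_intros nz)
qed

lemma holomorphic2_on_Omega1_to_bidisc: "holomorphic2_on Omega1_to_bidisc Omega1"
proof (rule holomorphic2_onI)
  fix x assume "x \<in> Omega1"
  then have nonpos: "1 - (fst x)\<^sup>2 - (snd x)\<^sup>2 \<notin> \<real>\<^sub>\<le>\<^sub>0"
    using Omega1_not_nonpos_Reals[of "fst x" "snd x"] by simp
  have nz: "1 + csqrt (1 - (fst x)\<^sup>2 - (snd x)\<^sup>2) \<noteq> 0"
    using Re_csqrt_pos[OF nonpos] by (rule one_plus_neq_zero_if_Re_pos)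
  show "complex_differentiable2 (\<lambda>x. fst (Omega1_to_bidisc x)) x \<and>
      complex_differentiable2 (\<lambda>x. snd (Omega1_to_bidisc x)) x"
    unfolding Omega1_to_bidisc_def case_prod_unfold fst_conv snd_conv
    by (intro conjI complex_differentiable2_intros nonpos nz)
qed

theorem theorem4p6:
  shows "biholomorphic2 (unit_disc \<times> unit_disc) Omega1"
  unfolding biholomorphic2_def
proof (intro exI conjI)
  show "holomorphic2_on bidisc_to_Omega1 (unit_disc \<times> unit_disc)"
    by (rule holomorphic2_on_bidisc_to_Omega1)
  show "holomorphic2_on Omega1_to_bidisc Omega1"
    by (rule holomorphic2_on_Omega1_to_bidisc)
  show "bidisc_to_Omega1 ` (unit_disc \<times> unit_disc) \<subseteq> Omega1"
    using bidisc_to_Omega1_in_Omega1 by blast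
  show "Omega1_to_bidisc ` Omega1 \<subseteq> unit_disc \<times> unit_disc"
    using Omega1_to_bidisc_in_bidisc by blast
  show "\<forall>z\<in>unit_disc \<times> unit_disc. Omega1_to_bidisc (bidisc_to_Omega1 z) = z"
    using Omega1_to_bidisc_bidisc_to_Omega1 by blast
  show "\<forall>w\<in>Omega1. bidisc_to_Omega1 (Omega1_to_bidisc w) = w"
    using bidisc_to_Omega1_Omega1_to_bidisc by blast
qed

end
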